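(* Consider the family of discrete-time load balancing systems described in the context, operated under a given Markovian load balancing policy, and assume $(\sigma_\Sigma^{(\epsilon)})^2 \to \sigma_\Sigma^2$ as $\epsilon\downarrow 0$. Suppose the policy is throughput optimal and that there exists $\alpha\in(0,1]$ such that the state space collapses to the cone $\mathcal{K}_\alpha$, i.e., there exist $\epsilon_0>0$ and constants $M_r$ ($r=1,2,\dots$) independent of $\epsilon$ such that $\mathbb{E}\big[\|\overline{\mathbf{Q}}^{(\epsilon)}_\perp\|^r\big]\le M_r$ for all $\epsilon\in(0,\epsilon_0)$ and all $r=1,2,\dots$. Then the policy is heavy-traffic delay optimal in steady state, i.e. $$\limsup_{\epsilon\downarrow 0}\ \epsilon\,\mathbb{E}\Big[\sum_{n=1}^N \overline{Q}_n^{(\epsilon)}\Big]\le \frac{\zeta}{2},\qquad \zeta=\sigma_\Sigma^2+\nu_\Sigma^2 .$$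
   Context: Model: a discrete-time system with one dispatcher and $N$ servers; server $n$ has an infinite-buffer FIFO queue of length $Q_n(t)$ at the beginning of slot $t$. The number of exogenous arrivals $A_\Sigma(t)$ at the beginning of slot $t$ is integer valued, i.i.d. over $t$, with mean $\lambda_\Sigma$, variance $\sigma_\Sigma^2$, $\mathbb{P}(A_\Sigma(t)=0)>0$ and $A_\Sigma(t)\le A_{\max}<\infty$. The service $S_n(t)$ offered by server $n$ in slot $t$ is integer valued, i.i.d. over $t$, independent across servers and of the arrivals, with $S_n(t)\le S_{\max}<\infty$, mean $\mu_n>0$ and variance $\nu_n^2$; $\mu_\Sigma=\sum_n\mu_n$, $\nu_\Sigma^2=\sum_n\nu_n^2$. In each slot the dispatcher sends the new arrivals to one queue according to a (possibly randomized) rule depending only on $\mathbf{Q}(t)$ (Markovian policy); $A_n(t)$ is the number routed to queue $n$. Dynamics: $Q_n(t+1)=Q_n(t)+A_n(t)-S_n(t)+U_n(t)$ with unused service $U_n(t)=\max\{S_n(t)-Q_n(t)-A_n(t),0\}$. Thus $\{\mathbf{Q}(t)\}$ is a Markov chain. One considers a family of such systems indexed by $\epsilon>0$, with the same service processes and arrival processes $A_\Sigma^{(\epsilon)}(t)$ of mean $\lambda_\Sigma^{(\epsilon)}=\mu_\Sigma-\epsilon$ and variance $(\sigma_\Sigma^{(\epsilon)})^2$. When the chain is positive recurrent, $\overline{\mathbf{Q}}^{(\epsilon)}$ denotes a random vector distributed according to its stationary distribution. A policy is throughput optimal if for every $\epsilon>0$ the chain is positive recurrent and all moments of $\|\overline{\mathbf{Q}}^{(\epsilon)}\|$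 are finite. Cone: for $\alpha\in[0,1]$, $\mathbf{b}^{(n)}\in\mathbb{R}^N$ has $n$-th component $1$ and all other components $\alpha$; $\mathcal{K}_\alpha=\{\sum_n w_n\mathbf{b}^{(n)}: w_n\ge 0\}$, and its polar cone is $\mathcal{K}_\alpha^\circ=\{\mathbf{x}:\langle \mathbf{x},\mathbf{y}\rangle\le 0\ \forall \mathbf{y}\in\mathcal{K}_\alpha\}$. Every $\mathbf{x}$ decomposes uniquely as $\mathbf{x}=\mathbf{x}_\parallel+\mathbf{x}_\perp$ with $\mathbf{x}_\parallel$ the Euclidean projection onto $\mathcal{K}_\alpha$ and $\mathbf{x}_\perp$ the projection onto $\mathcal{K}_\alpha^\circ$. $\|\cdot\|$ is the Euclidean norm. *)

theory Defs
  imports "HOL-Analysis.Analysis" "HOL-Probability.Probability"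
begin

text \<open>Q_n(t+1) = max(Q_n + A_n - S_n, 0), i.e. truncated
  nat subtraction, which equals Q_n + A_n - S_n + U_n.\<close>
definition lb_step :: "nat pmf \<Rightarrow> ('n::finite \<Rightarrow> nat pmf) \<Rightarrow> (('n \<Rightarrow> nat) \<Rightarrow> 'n pmf)
    \<Rightarrow> ('n \<Rightarrow> nat) \<Rightarrow> ('n \<Rightarrow> nat) pmf" where
  "lb_step A S P q =
     do { a \<leftarrow> A; i \<leftarrow> P q; s \<leftarrow> Pi_pmf UNIV 0 S;
          return_pmf (\<lambda>n. (q n + (if n = i then a else 0)) - s n) }"

definition stationary :: "(('n::finite \<Rightarrow> nat) \<Rightarrow> ('n \<Rightarrow> nat) pmf) \<Rightarrow> ('n \<Rightarrow> nat) pmf \<Rightarrow> bool" where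
  "stationary K \<pi> \<longleftrightarrow> bind_pmf \<pi> K = \<pi>"

definition qvec :: "('n::finite \<Rightarrow> nat) \<Rightarrow> real ^ 'n" where
  "qvec q = (\<chi> n. real (q n))"

definition cone_gen :: "real \<Rightarrow> 'n::finite \<Rightarrow> real ^ 'n" where
  "cone_gen \<alpha> n = (\<chi> m. if m = n then 1 else \<alpha>)"

definition cone_K :: "real \<Rightarrow> (real ^ 'n::finite) set" where
  "cone_K \<alpha> = {x. \<exists>w. (\<forall>n. w n \<ge> 0) \<and> x = (\<Sum>n\<in>UNIV. w n *\<^sub>R cone_gen \<alpha> n)}"

definition polar_cone :: "(real ^ 'n::finite) set \<Rightarrow> (real ^ 'n) set" where
  "polar_cone K = {x. \<forall>y\<in>K. inner x y \<le> 0}"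

definition perp_comp :: "real \<Rightarrow> real ^ 'n::finite \<Rightarrow> real ^ 'n" where
  "perp_comp \<alpha> x = closest_point (polar_cone (cone_K \<alpha>)) x"

end

theory Submission
  imports Defs
begin

text \<open>In steady state the expected change of (\<Sum>_n Q_n)^2 over one slot vanishes. The total
  queue length changes by the net input D = A - \<Sum>_n S_n, which has mean -\<epsilon> and variance
  \<sigma>^2 + \<nu>^2, plus the unused service U \<ge> 0, whose mean is therefore \<epsilon>. This gives
  2 \<epsilon> E[\<Sum>_n Q_n] \<le> E[D^2] + 2 E[(\<Sum>_n Q_n(t+1)) U]. Service is wasted only when some queue
  is empty, and a queue vector with an empty entry has total at most N (1 + 1/\<alpha>) times the
  norm of its component in the polar cone of K_\<alpha>. Splitting the cross term by AM-GM at scale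
  sqrt \<epsilon> and using the uniform bound on the second moment of that component makes it
  O(sqrt \<epsilon>), hence \<epsilon> E[\<Sum>_n Q_n] \<le> (\<sigma>^2 + \<nu>^2) / 2 + O(sqrt \<epsilon>).\<close>

section \<open>Expectations under finite pmfs\<close>

lemma integral_bind_pmf_nonneg:
  fixes f :: "'b \<Rightarrow> real"
  assumes fin: "\<And>x. x \<in> set_pmf M \<Longrightarrow> finite (set_pmf (N x))"
    and nonneg: "\<And>y. 0 \<le> f y"
    and int: "integrable (measure_pmf (bind_pmf M N)) f"
  shows "integrable M (\<lambda>x. measure_pmf.expectation (N x) f)"
    and "measure_pmf.expectation (bind_pmf M N) f =
         measure_pmf.expectation M (\<lambda>x. measure_pmf.expectation (N x) f)"
proof -
  define g where "g x = measure_pmf.expectation (N x) f" for x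
  have g_nonneg: "0 \<le> g x" for x
    unfolding g_def by (simp add: nonneg integral_nonneg_AE)
  have "(\<integral>\<^sup>+x. ennreal (g x) \<partial>M) = (\<integral>\<^sup>+x. \<integral>\<^sup>+y. ennreal (f y) \<partial>N x \<partial>M)"
    unfolding g_def
    by (intro nn_integral_cong_AE AE_pmfI nn_integral_eq_integral[symmetric]
          integrable_measure_pmf_finite fin) (auto simp: nonneg)
  also have "\<dots> = (\<integral>\<^sup>+y. ennreal (f y) \<partial>bind_pmf M N)"
    by simp
  also have "\<dots> = ennreal (measure_pmf.expectation (bind_pmf M N) f)"
    using int nonneg by (intro nn_integral_eq_integral) auto
  finally have nn: "(\<integral>\<^sup>+x. ennreal (g x) \<partial>M) = ennreal (measure_pmf.expectation (bind_pmf M N) f)" .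
  show int_g: "integrable M g"
    by (rule integrableI_nn_integral_finite[OF _ _ nn]) (auto simp: g_nonneg)
  have "ennreal (measure_pmf.expectation M g) = ennreal (measure_pmf.expectation (bind_pmf M N) f)"
    using int_g nn by (subst nn_integral_eq_integral[symmetric]) (auto simp: g_nonneg)
  then show "measure_pmf.expectation (bind_pmf M N) f = measure_pmf.expectation M g"
    by (simp add: g_nonneg nonneg integral_nonneg_AE)
qed

lemma expectation_pair_pmf_mult:
  fixes f :: "'a \<Rightarrow> real" and g :: "'b \<Rightarrow> real"
  assumes "finite (set_pmf A)" "finite (set_pmf B)"
  shows "measure_pmf.expectation (pair_pmf A B) (\<lambda>x. f (fst x) * g (snd x)) =
         measure_pmf.expectation A f * measure_pmf.expectation B g"
proof -
  have "measure_pmf.expectation (pair_pmf A B) (\<lambda>x. f (fst x) * g (snd x)) =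
        (\<Sum>x\<in>set_pmf A \<times> set_pmf B. f (fst x) * g (snd x) * pmf (pair_pmf A B) x)"
    using assms by (intro integral_measure_pmf_real) auto
  also have "\<dots> = (\<Sum>a\<in>set_pmf A. f a * pmf A a) * (\<Sum>b\<in>set_pmf B. g b * pmf B b)"
    by (simp add: sum.cartesian_product' sum_product pmf_pair mult_ac)
  also have "\<dots> = measure_pmf.expectation A f * measure_pmf.expectation B g"
    using assms by (simp add: integral_measure_pmf_real)
  finally show ?thesis .
qed

lemma integrable_pmf_dominated:
  fixes f g :: "'a \<Rightarrow> real"
  assumes "integrable (measure_pmf M) g" and "\<And>x. \<bar>f x\<bar> \<le> c * g x"
  shows "integrable (measure_pmf M) f"
  using integrable_mult_right[OF assms(1), of c]
proof (rule Bochner_Integration.integrable_bound)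
  show "AE x in measure_pmf M. norm (f x) \<le> norm (c * g x)"
    using assms(2) by (intro AE_pmfI) (metis abs_ge_self order_trans real_norm_def)
qed simp

definition sum_entries :: "('n::finite \<Rightarrow> nat) \<Rightarrow> real" where
  "sum_entries q = real (\<Sum>n\<in>UNIV. q n)"

lemma sum_entries_nonneg [simp]: "0 \<le> sum_entries q"
  by (simp add: sum_entries_def sum_nonneg)

lemma finite_set_Pi_pmf_UNIV:
  fixes S :: "'n::finite \<Rightarrow> 'a pmf"
  assumes "\<And>n. finite (set_pmf (S n))"
  shows "finite (set_pmf (Pi_pmf UNIV d S))"
  using assms by (auto simp: set_Pi_pmf)

lemma expectation_Pi_pmf_component:
  fixes S :: "'n::finite \<Rightarrow> 'a pmf" and f :: "'a \<Rightarrow> real"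
  shows "measure_pmf.expectation (Pi_pmf UNIV d S) (\<lambda>s. f (s m)) = measure_pmf.expectation (S m) f"
proof -
  have "measure_pmf.expectation (Pi_pmf UNIV d S) (\<lambda>s. f (s m)) =
        measure_pmf.expectation (map_pmf (\<lambda>s. s m) (Pi_pmf UNIV d S)) f"
    by simp
  also have "map_pmf (\<lambda>s. s m) (Pi_pmf UNIV d S) = S m"
    by (simp add: Pi_pmf_component)
  finally show ?thesis .
qed

lemma expectation_Pi_pmf_mult_components:
  fixes S :: "'n::finite \<Rightarrow> nat pmf"
  assumes fin: "\<And>n. finite (set_pmf (S n))" and "m \<noteq> n"
  shows "measure_pmf.expectation (Pi_pmf UNIV d S) (\<lambda>s. real (s m) * real (s n)) =
         measure_pmf.expectation (S m) real * measure_pmf.expectation (S n) real"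
proof -
  define f where "f k v = (if k \<in> {m, n} then real v else 1)" for k v
  have restrict: "(\<Prod>k\<in>UNIV. h k) = (\<Prod>k\<in>{m, n}. h k)" if "\<And>k. k \<notin> {m, n} \<Longrightarrow> h k = 1"
    for h :: "'n \<Rightarrow> real"
    using that by (intro prod.mono_neutral_right) auto
  have "measure_pmf.expectation (Pi_pmf UNIV d S) (\<lambda>s. real (s m) * real (s n)) =
        measure_pmf.expectation (Pi_pmf UNIV d S) (\<lambda>s. \<Prod>k\<in>UNIV. f k (s k))"
    using \<open>m \<noteq> n\<close> by (subst restrict) (simp_all add: f_def)
  also have "\<dots> = (\<Prod>k\<in>UNIV. measure_pmf.expectation (S k) (f k))"
    by (rule expectation_prod_Pi_pmf) (auto simp: f_def intro: integrable_measure_pmf_finite fin)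
  also have "\<dots> = measure_pmf.expectation (S m) real * measure_pmf.expectation (S n) real"
    using \<open>m \<noteq> n\<close> by (subst restrict) (simp_all add: f_def[abs_def])
  finally show ?thesis .
qed

lemma expectation_Pi_pmf_sum_entries:
  fixes S :: "'n::finite \<Rightarrow> nat pmf"
  assumes "\<And>n. finite (set_pmf (S n))"
  shows "measure_pmf.expectation (Pi_pmf UNIV d S) sum_entries =
         (\<Sum>n\<in>UNIV. measure_pmf.expectation (S n) real)"
  using assms
  unfolding sum_entries_def[abs_def]
  by (simp add: Bochner_Integration.integral_sum expectation_Pi_pmf_component
      integrable_measure_pmf_finite finite_set_Pi_pmf_UNIV)

lemma expectation_Pi_pmf_sum_entries_squared:
  fixes S :: "'n::finite \<Rightarrow> nat pmf"
  assumes fin: "\<And>n. finite (set_pmf (S n))"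
  defines "mu \<equiv> \<lambda>n. measure_pmf.expectation (S n) real"
  shows "measure_pmf.expectation (Pi_pmf UNIV d S) (\<lambda>s. (sum_entries s)\<^sup>2) =
         (\<Sum>n\<in>UNIV. mu n)\<^sup>2 + (\<Sum>n\<in>UNIV. measure_pmf.variance (S n) real)"
proof -
  have moment: "measure_pmf.expectation (Pi_pmf UNIV d S) (\<lambda>s. real (s m) * real (s n)) =
        mu m * mu n + (if m = n then measure_pmf.variance (S m) real else 0)" for m n
  proof (cases "m = n")
    case True
    have "measure_pmf.expectation (Pi_pmf UNIV d S) (\<lambda>s. real (s m) * real (s n)) =
          measure_pmf.expectation (S m) (\<lambda>v. (real v)\<^sup>2)"
      using True expectation_Pi_pmf_component[where f="\<lambda>v. (real v)\<^sup>2" and d=d and S=S and m=m]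
      by (simp add: power2_eq_square)
    also have "\<dots> = measure_pmf.variance (S m) real + (mu m)\<^sup>2"
      unfolding mu_def
      by (subst measure_pmf.variance_eq) (auto intro: integrable_measure_pmf_finite fin)
    finally show ?thesis
      using True by (simp add: power2_eq_square)
  qed (simp add: mu_def expectation_Pi_pmf_mult_components fin)
  have "measure_pmf.expectation (Pi_pmf UNIV d S) (\<lambda>s. (sum_entries s)\<^sup>2) =
        (\<Sum>m\<in>UNIV. \<Sum>n\<in>UNIV.
           measure_pmf.expectation (Pi_pmf UNIV d S) (\<lambda>s. real (s m) * real (s n)))"
    by (simp add: sum_entries_def power2_eq_square sum_product Bochner_Integration.integral_sum
        integrable_measure_pmf_finite finite_set_Pi_pmf_UNIV fin)
  also have "\<dots> = (\<Sum>n\<in>UNIV. mu n)\<^sup>2 + (\<Sum>n\<in>UNIV. measure_pmf.variance (S n) real)"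
    by (simp add: moment sum.distrib power2_eq_square sum_product)
  finally show ?thesis .
qed

lemma expectation_add_const_squared:
  fixes f :: "'a \<Rightarrow> real"
  assumes "finite (set_pmf M)"
  shows "measure_pmf.expectation M (\<lambda>x. (c + f x)\<^sup>2) =
         (c + measure_pmf.expectation M f)\<^sup>2 + measure_pmf.variance M f"
  using assms
  by (simp add: measure_pmf.variance_eq integrable_measure_pmf_finite power2_eq_square
      algebra_simps)

section \<open>The polar cone of K_\<alpha>\<close>

lemma closed_polar_cone: "closed (polar_cone K)"
proof -
  have "polar_cone K = (\<Inter>y\<in>K. {x. inner y x \<le> 0})"
    by (auto simp: polar_cone_def inner_commute)
  then show ?thesis
    by (simp add: closed_INT closed_halfspace_le)
qed

lemma convex_polar_cone: "convex (polar_cone K)"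
  unfolding polar_cone_def convex_def
  by (auto simp: inner_add_left intro!: add_nonpos_nonpos mult_nonneg_nonpos)

lemma zero_in_polar_cone: "0 \<in> polar_cone K"
  unfolding polar_cone_def by simp

lemma scaleR_in_polar_cone: "x \<in> polar_cone K \<Longrightarrow> 0 \<le> c \<Longrightarrow> c *\<^sub>R x \<in> polar_cone K"
  unfolding polar_cone_def by (auto simp: mult_nonneg_nonpos)

lemma perp_comp_in_polar_cone: "perp_comp \<alpha> x \<in> polar_cone (cone_K \<alpha>)"
  unfolding perp_comp_def
  using closed_polar_cone zero_in_polar_cone by (intro closest_point_in_set) auto

lemma norm_perp_comp_le: "norm (perp_comp \<alpha> x) \<le> 2 * norm x"
proof -
  have "norm (x - perp_comp \<alpha> x) \<le> norm x"
    using closest_point_le[OF closed_polar_cone zero_in_polar_cone, of x]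
    by (simp add: perp_comp_def dist_norm)
  then show ?thesis
    using norm_triangle_sub[of "perp_comp \<alpha> x" x] by (simp add: norm_minus_commute)
qed

lemma cone_K_component_le:
  assumes "v \<in> cone_K \<alpha>" "0 < \<alpha>" "\<alpha> \<le> 1"
  shows "\<alpha> * v $ k \<le> v $ n"
proof -
  obtain w where w_nonneg: "\<And>m. w m \<ge> 0" and v: "v = (\<Sum>m\<in>UNIV. w m *\<^sub>R cone_gen \<alpha> m)"
    using assms(1) unfolding cone_K_def by auto
  have v_comp: "v $ j = (\<Sum>m\<in>UNIV. w m * (if j = m then 1 else \<alpha>))" for j
    by (simp add: v cone_gen_def)
  have "\<alpha> * (if k = m then 1 else \<alpha>) \<le> (if n = m then 1 else \<alpha>)" for m
    using assms(2,3) by (auto simp: mult_le_one mult_left_le)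
  then have "(\<Sum>m\<in>UNIV. w m * (\<alpha> * (if k = m then 1 else \<alpha>))) \<le> (\<Sum>m\<in>UNIV. w m * (if n = m then 1 else \<alpha>))"
    by (intro sum_mono mult_left_mono w_nonneg)
  then show ?thesis
    by (simp add: v_comp sum_distrib_left mult_ac)
qed

lemma component_le_norm_perp_comp:
  fixes x :: "real ^ 'n::finite"
  assumes \<alpha>: "0 < \<alpha>" "\<alpha> \<le> 1" and "x $ n = 0"
  shows "x $ k \<le> (1 + 1 / \<alpha>) * norm (perp_comp \<alpha> x)"
proof -
  define p where "p = perp_comp \<alpha> x"
  \<comment> \<open>test the variational inequality of the projection against e_k - e_n / \<alpha>\<close>
  define z :: "real ^ 'n" where "z = axis k 1 - (1 / \<alpha>) *\<^sub>R axis n 1"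
  have inner_z: "inner u z = u $ k - u $ n / \<alpha>" for u :: "real ^ 'n"
    by (simp add: z_def inner_diff_right inner_axis)
  have residual: "inner (x - p) (y - p) \<le> 0" if "y \<in> polar_cone (cone_K \<alpha>)" for y
    unfolding p_def perp_comp_def
    by (rule closest_point_dot[OF convex_polar_cone closed_polar_cone that])
  have "z \<in> polar_cone (cone_K \<alpha>)"
    unfolding polar_cone_def
  proof safe
    fix v :: "real ^ 'n"
    assume "v \<in> cone_K \<alpha>"
    then have "v $ k \<le> v $ n / \<alpha>"
      using cone_K_component_le[of v \<alpha> k n] \<alpha> by (simp add: field_simps)
    then show "inner z v \<le> 0"
      by (simp add: inner_commute[of z] inner_z)
  qed
  moreover have "2 *\<^sub>R p \<in> polar_cone (cone_K \<alpha>)"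
    unfolding p_def by (intro scaleR_in_polar_cone perp_comp_in_polar_cone) simp
  ultimately have "inner (x - p) z \<le> 0"
    using residual[of z] residual[of "2 *\<^sub>R p"] by (simp add: algebra_simps)
  then have "x $ k \<le> p $ k - p $ n / \<alpha>"
    using \<open>x $ n = 0\<close> by (simp add: inner_z field_simps)
  also have "\<dots> \<le> norm p + norm p / \<alpha>"
  proof -
    have "- p $ n \<le> norm p"
      using component_le_norm_cart[of p n] by simp
    then have "- p $ n / \<alpha> \<le> norm p / \<alpha>"
      using divide_right_mono[of "- p $ n" "norm p" \<alpha>] \<alpha> by simp
    then show ?thesis
      using component_le_norm_cart[of p k] by simp
  qed
  finally show ?thesis
    by (simp add: p_def algebra_simps)
qed

section \<open>One slot of the dynamics\<close>

fun next_state :: "('n::finite \<Rightarrow> nat) \<Rightarrow> nat \<times> 'n \<times> ('n \<Rightarrow> nat) \<Rightarrow> 'n \<Rightarrow> nat" where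
  "next_state q (a, i, s) = (\<lambda>n. (q n + (if n = i then a else 0)) - s n)"

definition net_input :: "nat \<times> 'n::finite \<times> ('n \<Rightarrow> nat) \<Rightarrow> real" where
  "net_input x = real (fst x) - sum_entries (snd (snd x))"

lemma lb_step_eq_map_pmf:
  "lb_step A S P q = map_pmf (next_state q) (pair_pmf A (pair_pmf (P q) (Pi_pmf UNIV 0 S)))"
  by (simp add: lb_step_def pair_pmf_def map_pmf_def bind_assoc_pmf bind_return_pmf)

lemma finite_set_lb_step:
  fixes S :: "'n::finite \<Rightarrow> nat pmf"
  assumes "finite (set_pmf A)" and "\<And>n. finite (set_pmf (S n))"
  shows "finite (set_pmf (lb_step A S P q))"
  using assms by (simp add: lb_step_eq_map_pmf finite_set_Pi_pmf_UNIV)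

lemma sum_entries_le_norm_qvec: "sum_entries q \<le> real CARD('n) * norm (qvec q)"
  for q :: "'n::finite \<Rightarrow> nat"
proof -
  have "sum_entries q = (\<Sum>n\<in>UNIV. qvec q $ n)"
    by (simp add: sum_entries_def qvec_def)
  also have "\<dots> \<le> (\<Sum>n\<in>(UNIV::'n set). norm (qvec q))"
    by (intro sum_mono) (metis abs_ge_self component_le_norm_cart order_trans)
  finally show ?thesis by simp
qed

lemma sum_entries_le_norm_perp_comp:
  fixes q :: "'n::finite \<Rightarrow> nat"
  assumes "0 < \<alpha>" "\<alpha> \<le> 1" and "q n = 0"
  shows "sum_entries q \<le> real CARD('n) * (1 + 1 / \<alpha>) * norm (perp_comp \<alpha> (qvec q))"
proof -
  have "sum_entries q = (\<Sum>k\<in>UNIV. qvec q $ k)"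
    by (simp add: sum_entries_def qvec_def)
  also have "\<dots> \<le> (\<Sum>k\<in>(UNIV::'n set). (1 + 1 / \<alpha>) * norm (perp_comp \<alpha> (qvec q)))"
    using assms by (intro sum_mono component_le_norm_perp_comp) (auto simp: qvec_def)
  finally show ?thesis by simp
qed

text \<open>U is the total unused service \<Sum>_n U_n(t) of the slot.\<close>
lemma unused_service_bounds:
  fixes q :: "'n::finite \<Rightarrow> nat" and a :: nat and i :: 'n
  assumes "\<And>n. s n \<le> Smax"
  defines "y \<equiv> next_state q (a, i, s)"
  defines "U \<equiv> sum_entries y - sum_entries q - net_input (a, i, s)"
  shows "0 \<le> U" and "U \<le> real CARD('n) * real Smax" and "U \<noteq> 0 \<Longrightarrow> \<exists>n. y n = 0"
proof -
  define u where "u n = real (y n) - real (q n) - real (if n = i then a else 0) + real (s n)" for n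
  have arrivals: "real a = (\<Sum>n\<in>UNIV. real (if n = i then a else 0))"
    by (simp add: if_distrib cong: if_cong)
  have U_sum: "U = (\<Sum>n\<in>UNIV. u n)"
    unfolding U_def u_def sum_entries_def net_input_def fst_conv snd_conv arrivals
    by (simp add: sum_subtractf sum.distrib)
  have "0 \<le> u n" and "u n \<le> real Smax" and u_nonzero: "u n \<noteq> 0 \<Longrightarrow> y n = 0" for n
    using assms(1)[of n] by (auto simp: u_def y_def)
  then show "0 \<le> U" and "U \<le> real CARD('n) * real Smax"
    using sum_mono[of UNIV u "\<lambda>_. real Smax"] by (auto simp: U_sum intro: sum_nonneg)
  show "U \<noteq> 0 \<Longrightarrow> \<exists>n. y n = 0"
    using u_nonzero by (metis U_sum sum.neutral)
qed

lemma sum_entries_next_state_squared_le: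
  fixes q :: "'n::finite \<Rightarrow> nat" and a :: nat and i :: 'n
  assumes \<alpha>: "0 < \<alpha>" "\<alpha> \<le> 1" and "0 < \<delta>" and "\<And>n. s n \<le> Smax"
  defines "y \<equiv> next_state q (a, i, s)" and "D \<equiv> net_input (a, i, s)"
    and "C \<equiv> real CARD('n) * (1 + 1 / \<alpha>)"
  shows "(sum_entries y)\<^sup>2 \<le> (sum_entries q + D)\<^sup>2 + C * \<delta> * (norm (perp_comp \<alpha> (qvec y)))\<^sup>2
           + C * real CARD('n) * real Smax / \<delta> * (sum_entries y - sum_entries q - D)"
proof -
  define Y where "Y = sum_entries y"
  define U where "U = Y - sum_entries q - D"
  define p where "p = norm (perp_comp \<alpha> (qvec y))"
  have U_nonneg: "0 \<le> U" and U_le: "U \<le> real CARD('n) * real Smax"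
    using unused_service_bounds[of s Smax q a i] assms(4) by (simp_all add: U_def Y_def y_def D_def)
  have C_nonneg: "0 \<le> C"
    using \<alpha> by (simp add: C_def)
  \<comment> \<open>service is wasted only if some queue is empty, and then the perpendicular component controls Y\<close>
  have "Y * U \<le> C * p * U"
  proof (cases "U = 0")
    case False
    then obtain n where "y n = 0"
      using unused_service_bounds(3)[of s Smax q a i] assms(4) by (auto simp: U_def Y_def y_def D_def)
    then have "Y \<le> C * p"
      unfolding Y_def C_def p_def by (rule sum_entries_le_norm_perp_comp[OF \<alpha>])
    then show ?thesis
      using U_nonneg by (rule mult_right_mono)
  qed simp
  then have "2 * (Y * U) \<le> C * (2 * p * U)"
    by simp
  also have "\<dots> \<le> C * (\<delta> * p\<^sup>2 + U\<^sup>2 / \<delta>)"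
  proof -
    have "0 \<le> (\<delta> * p - U)\<^sup>2 / \<delta>"
      using \<open>0 < \<delta>\<close> by simp
    also have "\<dots> = \<delta> * p\<^sup>2 + U\<^sup>2 / \<delta> - 2 * p * U"
      using \<open>0 < \<delta>\<close> by (simp add: power2_eq_square field_simps)
    finally show ?thesis
      using C_nonneg by (intro mult_left_mono) simp_all
  qed
  also have "\<dots> \<le> C * (\<delta> * p\<^sup>2 + real CARD('n) * real Smax * U / \<delta>)"
  proof -
    have "U\<^sup>2 \<le> real CARD('n) * real Smax * U"
      using mult_right_mono[OF U_le U_nonneg] by (simp add: power2_eq_square)
    then show ?thesis
      using C_nonneg \<open>0 < \<delta>\<close> by (intro mult_left_mono add_left_mono divide_right_mono) simp_all
  qed
  finally have "2 * (Y * U) \<le> C * \<delta> * p\<^sup>2 + C * real CARD('n) * real Smax / \<delta> * U"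
    by (simp add: algebra_simps)
  moreover have "Y\<^sup>2 = (sum_entries q + D)\<^sup>2 + 2 * (Y * U) - U\<^sup>2"
    by (simp add: U_def power2_eq_square algebra_simps)
  ultimately show ?thesis
    unfolding Y_def[symmetric] p_def[symmetric] U_def[symmetric]
    using zero_le_power2[of U] by linarith
qed

lemma expectation_net_input:
  fixes S :: "'n::finite \<Rightarrow> nat pmf" and I :: "'n pmf"
  assumes "finite (set_pmf A)" and "\<And>n. finite (set_pmf (S n))"
  shows "measure_pmf.expectation (pair_pmf A (pair_pmf I (Pi_pmf UNIV 0 S))) net_input =
         measure_pmf.expectation A real - (\<Sum>n\<in>UNIV. measure_pmf.expectation (S n) real)"
proof -
  let ?J = "pair_pmf A (pair_pmf I (Pi_pmf UNIV 0 S))"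
  have "finite (set_pmf ?J)"
    using assms by (simp add: finite_set_Pi_pmf_UNIV)
  then have "measure_pmf.expectation ?J net_input =
      measure_pmf.expectation ?J (\<lambda>x. real (fst x)) -
      measure_pmf.expectation ?J (\<lambda>x. (\<lambda>z. sum_entries (snd z)) (snd x))"
    unfolding net_input_def[abs_def]
    by (intro Bochner_Integration.integral_diff integrable_measure_pmf_finite)
  also have "\<dots> = measure_pmf.expectation A real - measure_pmf.expectation (Pi_pmf UNIV 0 S) sum_entries"
    by (simp only: expectation_pair_pmf_fst expectation_pair_pmf_snd[where f=sum_entries]
        expectation_pair_pmf_snd[where f="\<lambda>z. sum_entries (snd z)"])
  finally show ?thesis
    using assms(2) by (simp add: expectation_Pi_pmf_sum_entries)
qed

lemma variance_net_input:
  fixes S :: "'n::finite \<Rightarrow> nat pmf" and I :: "'n pmf"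
  assumes finA: "finite (set_pmf A)" and finS: "\<And>n. finite (set_pmf (S n))"
  shows "measure_pmf.variance (pair_pmf A (pair_pmf I (Pi_pmf UNIV 0 S))) net_input =
         measure_pmf.variance A real + (\<Sum>n\<in>UNIV. measure_pmf.variance (S n) real)"
proof -
  let ?Pi = "Pi_pmf UNIV 0 S"
  let ?J = "pair_pmf A (pair_pmf I ?Pi)"
  define lam where "lam = measure_pmf.expectation A real"
  define mu where "mu = (\<Sum>n\<in>UNIV. measure_pmf.expectation (S n) real)"
  have finIS: "finite (set_pmf (pair_pmf I ?Pi))"
    using finS by (simp add: finite_set_Pi_pmf_UNIV)
  then have finJ: "finite (set_pmf ?J)"
    using finA by simp
  have "(net_input x)\<^sup>2 = (real (fst x))\<^sup>2 - 2 * (real (fst x) * sum_entries (snd (snd x)))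
          + (sum_entries (snd (snd x)))\<^sup>2" for x :: "nat \<times> 'n \<times> ('n \<Rightarrow> nat)"
    by (simp add: net_input_def power2_eq_square algebra_simps)
  then have "measure_pmf.expectation ?J (\<lambda>x. (net_input x)\<^sup>2) =
        measure_pmf.expectation ?J (\<lambda>x. (real (fst x))\<^sup>2)
        - 2 * measure_pmf.expectation ?J (\<lambda>x. real (fst x) * sum_entries (snd (snd x)))
        + measure_pmf.expectation ?J (\<lambda>x. (sum_entries (snd (snd x)))\<^sup>2)"
    using finJ by (simp add: integrable_measure_pmf_finite)
  also have "measure_pmf.expectation ?J (\<lambda>x. (real (fst x))\<^sup>2) = measure_pmf.variance A real + lam\<^sup>2"
    using finA expectation_pair_pmf_fst[where f="\<lambda>a. (real a)\<^sup>2"]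
    by (simp add: lam_def measure_pmf.variance_eq integrable_measure_pmf_finite)
  also have "measure_pmf.expectation ?J (\<lambda>x. real (fst x) * sum_entries (snd (snd x))) = lam * mu"
    using expectation_pair_pmf_mult[OF finA finIS, of real "\<lambda>z. sum_entries (snd z)"] finS
    by (simp only: lam_def mu_def expectation_pair_pmf_snd[where f=sum_entries]
        expectation_Pi_pmf_sum_entries)
  also have "measure_pmf.expectation ?J (\<lambda>x. (sum_entries (snd (snd x)))\<^sup>2) =
             mu\<^sup>2 + (\<Sum>n\<in>UNIV. measure_pmf.variance (S n) real)"
    using finS
    by (simp only: mu_def expectation_pair_pmf_snd[where f="\<lambda>z. (sum_entries (snd z))\<^sup>2"]
        expectation_pair_pmf_snd[where f="\<lambda>s. (sum_entries s)\<^sup>2"]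
        expectation_Pi_pmf_sum_entries_squared)
  finally have second_moment: "measure_pmf.expectation ?J (\<lambda>x. (net_input x)\<^sup>2) =
      measure_pmf.variance A real + (\<Sum>n\<in>UNIV. measure_pmf.variance (S n) real) + (lam - mu)\<^sup>2"
    by (simp add: power2_eq_square algebra_simps)
  have mean: "measure_pmf.expectation ?J net_input = lam - mu"
    unfolding lam_def mu_def using finA finS by (rule expectation_net_input)
  have "measure_pmf.variance ?J net_input =
        measure_pmf.expectation ?J (\<lambda>x. (net_input x)\<^sup>2) - (measure_pmf.expectation ?J net_input)\<^sup>2"
    using finJ by (intro measure_pmf.variance_eq integrable_measure_pmf_finite)
  then show ?thesis
    by (simp only: second_moment mean)
qed

lemma expectation_lb_step_sum_entries_squared_le:
  fixes A :: "nat pmf" and S :: "'n::finite \<Rightarrow> nat pmf" and P :: "('n \<Rightarrow> nat) \<Rightarrow> 'n pmf"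
    and q :: "'n \<Rightarrow> nat"
  assumes \<alpha>: "0 < \<alpha>" "\<alpha> \<le> 1" and "0 < \<delta>"
    and finA: "finite (set_pmf A)" and S_bdd: "\<And>n. set_pmf (S n) \<subseteq> {..Smax}"
  defines "lam \<equiv> measure_pmf.expectation A real"
    and "mu \<equiv> (\<Sum>n\<in>UNIV. measure_pmf.expectation (S n) real)"
    and "C \<equiv> real CARD('n) * (1 + 1 / \<alpha>)"
    and "K \<equiv> lb_step A S P q"
  shows "measure_pmf.expectation K (\<lambda>y. (sum_entries y)\<^sup>2) \<le>
           (sum_entries q + (lam - mu))\<^sup>2
           + measure_pmf.variance A real + (\<Sum>n\<in>UNIV. measure_pmf.variance (S n) real)
           + C * \<delta> * measure_pmf.expectation K (\<lambda>y. (norm (perp_comp \<alpha> (qvec y)))\<^sup>2)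
           + C * real CARD('n) * real Smax / \<delta> *
               (measure_pmf.expectation K sum_entries - sum_entries q - (lam - mu))"
proof -
  define J where "J = pair_pmf A (pair_pmf (P q) (Pi_pmf UNIV 0 S))"
  define c where "c = C * real CARD('n) * real Smax / \<delta>"
  have finS: "finite (set_pmf (S n))" for n
    using S_bdd[of n] finite_subset by blast
  have finJ: "finite (set_pmf J)"
    using finA finS by (simp add: J_def finite_set_Pi_pmf_UNIV)
  note integrable_J = integrable_measure_pmf_finite[OF finJ]
  have K_eq: "measure_pmf.expectation K f = measure_pmf.expectation J (\<lambda>x. f (next_state q x))"
    for f :: "_ \<Rightarrow> real"
    by (simp add: K_def J_def lb_step_eq_map_pmf)
  have drift: "(sum_entries (next_state q x))\<^sup>2 \<le> (sum_entries q + net_input x)\<^sup>2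
          + C * \<delta> * (norm (perp_comp \<alpha> (qvec (next_state q x))))\<^sup>2
          + c * (sum_entries (next_state q x) - sum_entries q - net_input x)"
    if "x \<in> set_pmf J" for x
  proof -
    obtain a i s where x: "x = (a, i, s)"
      by (cases x) auto
    have "s n \<le> Smax" for n
      using that S_bdd[of n] by (auto simp: x J_def set_Pi_pmf PiE_dflt_def)
    then show ?thesis
      unfolding x C_def c_def by (rule sum_entries_next_state_squared_le[OF \<alpha> \<open>0 < \<delta>\<close>])
  qed
  have "measure_pmf.expectation K (\<lambda>y. (sum_entries y)\<^sup>2) \<le>
      measure_pmf.expectation J (\<lambda>x. (sum_entries q + net_input x)\<^sup>2
        + C * \<delta> * (norm (perp_comp \<alpha> (qvec (next_state q x))))\<^sup>2
        + c * (sum_entries (next_state q x) - sum_entries q - net_input x))"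
    unfolding K_eq by (intro integral_mono_AE integrable_J AE_pmfI drift)
  also have "\<dots> = measure_pmf.expectation J (\<lambda>x. (sum_entries q + net_input x)\<^sup>2)
      + C * \<delta> * measure_pmf.expectation K (\<lambda>y. (norm (perp_comp \<alpha> (qvec y)))\<^sup>2)
      + c * (measure_pmf.expectation K sum_entries - sum_entries q - measure_pmf.expectation J net_input)"
    unfolding K_eq by (simp add: integrable_J)
  also have "measure_pmf.expectation J (\<lambda>x. (sum_entries q + net_input x)\<^sup>2) =
      (sum_entries q + measure_pmf.expectation J net_input)\<^sup>2 + measure_pmf.variance J net_input"
    by (rule expectation_add_const_squared[OF finJ])
  also have "measure_pmf.variance J net_input =
      measure_pmf.variance A real + (\<Sum>n\<in>UNIV. measure_pmf.variance (S n) real)"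
    unfolding J_def using finA finS by (rule variance_net_input)
  also have "measure_pmf.expectation J net_input = lam - mu"
    unfolding J_def lam_def mu_def using finA finS by (rule expectation_net_input)
  finally show ?thesis
    by (simp add: c_def)
qed

section \<open>Steady state\<close>

lemma stationary_expectation:
  fixes f :: "('n::finite \<Rightarrow> nat) \<Rightarrow> real"
  assumes "stationary K \<pi>" and "\<And>q. finite (set_pmf (K q))"
    and "\<And>y. 0 \<le> f y" and "integrable \<pi> f"
  shows "integrable \<pi> (\<lambda>q. measure_pmf.expectation (K q) f)"
    and "measure_pmf.expectation \<pi> f = measure_pmf.expectation \<pi> (\<lambda>q. measure_pmf.expectation (K q) f)"
  using integral_bind_pmf_nonneg[of \<pi> K f] assms by (simp_all add: stationary_def)

lemma stationary_sum_entries_bound: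
  fixes A :: "nat pmf" and S :: "'n::finite \<Rightarrow> nat pmf" and P :: "('n \<Rightarrow> nat) \<Rightarrow> 'n pmf"
  assumes stat: "stationary (lb_step A S P) \<pi>"
    and finA: "finite (set_pmf A)" and S_bdd: "\<And>n. set_pmf (S n) \<subseteq> {..Smax}"
    and \<alpha>: "0 < \<alpha>" "\<alpha> \<le> 1" and "0 < \<delta>"
    and int1: "integrable \<pi> (\<lambda>q. norm (qvec q))"
    and int2: "integrable \<pi> (\<lambda>q. (norm (qvec q))\<^sup>2)"
    and perp_bdd: "measure_pmf.expectation \<pi> (\<lambda>q. (norm (perp_comp \<alpha> (qvec q)))\<^sup>2) \<le> M2"
  defines "lam \<equiv> measure_pmf.expectation A real"
    and "mu \<equiv> (\<Sum>n\<in>UNIV. measure_pmf.expectation (S n) real)"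
    and "C \<equiv> real CARD('n) * (1 + 1 / \<alpha>)"
  shows "2 * (mu - lam) * measure_pmf.expectation \<pi> sum_entries \<le>
           measure_pmf.variance A real + (\<Sum>n\<in>UNIV. measure_pmf.variance (S n) real)
           + (lam - mu)\<^sup>2 + C * \<delta> * M2 + C * real CARD('n) * real Smax * (mu - lam) / \<delta>"
proof -
  define K where "K = lb_step A S P"
  define perp :: "('n \<Rightarrow> nat) \<Rightarrow> real" where "perp = (\<lambda>q. (norm (perp_comp \<alpha> (qvec q)))\<^sup>2)"
  define c where "c = C * real CARD('n) * real Smax / \<delta>"
  define v where "v = measure_pmf.variance A real + (\<Sum>n\<in>UNIV. measure_pmf.variance (S n) real)"
  have finK: "finite (set_pmf (K q))" for q
    using finA S_bdd finite_subset unfolding K_def by (blast intro: finite_set_lb_step)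
  have int_sum: "integrable \<pi> sum_entries"
    by (rule integrable_pmf_dominated[OF int1, of _ "real CARD('n)"])
       (simp add: sum_entries_le_norm_qvec)
  have int_sum_sq: "integrable \<pi> (\<lambda>q. (sum_entries q)\<^sup>2)"
  proof (rule integrable_pmf_dominated[OF int2, of _ "(real CARD('n))\<^sup>2"])
    fix q :: "'n \<Rightarrow> nat"
    have "(sum_entries q)\<^sup>2 \<le> (real CARD('n) * norm (qvec q))\<^sup>2"
      by (intro power_mono sum_entries_le_norm_qvec) simp
    then show "\<bar>(sum_entries q)\<^sup>2\<bar> \<le> (real CARD('n))\<^sup>2 * (norm (qvec q))\<^sup>2"
      by (simp add: power_mult_distrib)
  qed
  have int_perp: "integrable \<pi> perp"
  proof (rule integrable_pmf_dominated[OF int2, of _ 4])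
    fix q :: "'n \<Rightarrow> nat"
    have "perp q \<le> (2 * norm (qvec q))\<^sup>2"
      unfolding perp_def by (intro power_mono norm_perp_comp_le) simp
    then show "\<bar>perp q\<bar> \<le> 4 * (norm (qvec q))\<^sup>2"
      by (simp add: perp_def power_mult_distrib)
  qed
  have stat': "stationary K \<pi>"
    using stat by (simp add: K_def)
  note stat_sum = stationary_expectation[OF stat' finK sum_entries_nonneg int_sum]
  note stat_sum_sq = stationary_expectation[OF stat' finK zero_le_power2 int_sum_sq]
  have perp_nonneg: "0 \<le> perp q" for q
    by (simp add: perp_def)
  note stat_perp = stationary_expectation[OF stat' finK perp_nonneg int_perp]
  define k where "k = lam - mu"
  define h where "h = (\<lambda>q. (sum_entries q + k)\<^sup>2 + v
      + C * \<delta> * measure_pmf.expectation (K q) perp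
      + c * (measure_pmf.expectation (K q) sum_entries - sum_entries q - k))"
  have drift: "measure_pmf.expectation (K q) (\<lambda>y. (sum_entries y)\<^sup>2) \<le> h q" for q
    using expectation_lb_step_sum_entries_squared_le[where S=S and P=P and q=q, OF \<alpha> \<open>0 < \<delta>\<close> finA S_bdd]
    unfolding h_def K_def perp_def c_def C_def k_def lam_def mu_def v_def by linarith
  have "measure_pmf.expectation \<pi> (\<lambda>q. (sum_entries q)\<^sup>2) \<le> measure_pmf.expectation \<pi> h"
    unfolding stat_sum_sq(2)
    using stat_sum_sq(1) stat_sum(1) stat_perp(1) int_sum int_sum_sq
    by (intro integral_mono drift) (simp_all add: h_def power2_sum)
  also have "measure_pmf.expectation \<pi> h = measure_pmf.expectation \<pi> (\<lambda>q. (sum_entries q)\<^sup>2)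
      + 2 * k * measure_pmf.expectation \<pi> sum_entries + k\<^sup>2 + v
      + C * \<delta> * measure_pmf.expectation \<pi> perp - c * k"
    using stat_sum stat_perp int_sum int_sum_sq
    by (simp add: h_def power2_sum algebra_simps)
  finally have "- 2 * k * measure_pmf.expectation \<pi> sum_entries \<le> k\<^sup>2 + v + C * \<delta> * measure_pmf.expectation \<pi> perp - c * k"
    by simp
  moreover have "C * \<delta> * measure_pmf.expectation \<pi> perp \<le> C * \<delta> * M2"
    using perp_bdd \<alpha> \<open>0 < \<delta>\<close> by (intro mult_left_mono) (simp_all add: perp_def C_def)
  moreover have "2 * (mu - lam) * measure_pmf.expectation \<pi> sum_entries =
      - 2 * k * measure_pmf.expectation \<pi> sum_entries"
    by (simp add: k_def algebra_simps)
  moreover have "C * real CARD('n) * real Smax * (mu - lam) / \<delta> = - c * k"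
    by (simp add: c_def k_def diff_divide_distrib algebra_simps)
  ultimately show ?thesis
    unfolding v_def k_def by linarith
qed

lemma stationary_sum_entries_bound_sqrt:
  fixes A :: "nat pmf" and S :: "'n::finite \<Rightarrow> nat pmf" and P :: "('n \<Rightarrow> nat) \<Rightarrow> 'n pmf"
  assumes stat: "stationary (lb_step A S P) \<pi>"
    and finA: "finite (set_pmf A)" and S_bdd: "\<And>n. set_pmf (S n) \<subseteq> {..Smax}"
    and \<alpha>: "0 < \<alpha>" "\<alpha> \<le> 1"
    and int1: "integrable \<pi> (\<lambda>q. norm (qvec q))"
    and int2: "integrable \<pi> (\<lambda>q. (norm (qvec q))\<^sup>2)"
    and perp_bdd: "measure_pmf.expectation \<pi> (\<lambda>q. (norm (perp_comp \<alpha> (qvec q)))\<^sup>2) \<le> M2"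
    and "0 < \<epsilon>"
    and mean: "measure_pmf.expectation A real = (\<Sum>n\<in>UNIV. measure_pmf.expectation (S n) real) - \<epsilon>"
  defines "C \<equiv> real CARD('n) * (1 + 1 / \<alpha>)"
  shows "\<epsilon> * measure_pmf.expectation \<pi> sum_entries \<le>
           (measure_pmf.variance A real + (\<Sum>n\<in>UNIV. measure_pmf.variance (S n) real)
            + \<epsilon>\<^sup>2 + C * sqrt \<epsilon> * M2 + C * real CARD('n) * real Smax * sqrt \<epsilon>) / 2"
proof -
  have sqrt_eq: "C * real CARD('n) * real Smax * \<epsilon> / sqrt \<epsilon> = C * real CARD('n) * real Smax * sqrt \<epsilon>"
    using real_div_sqrt[of \<epsilon>] \<open>0 < \<epsilon>\<close> by (simp flip: times_divide_eq_right)
  have "2 * (\<epsilon> * measure_pmf.expectation \<pi> sum_entries) \<le>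
      measure_pmf.variance A real + (\<Sum>n\<in>UNIV. measure_pmf.variance (S n) real) + \<epsilon>\<^sup>2
      + C * sqrt \<epsilon> * M2 + C * real CARD('n) * real Smax * \<epsilon> / sqrt \<epsilon>"
    using stationary_sum_entries_bound[OF stat finA S_bdd \<alpha> real_sqrt_gt_zero[OF \<open>0 < \<epsilon>\<close>]
        int1 int2 perp_bdd]
    unfolding mean C_def by simp
  then show ?thesis
    unfolding sqrt_eq by (simp add: field_simps)
qed

theorem theorem1:
  fixes Arr :: "real \<Rightarrow> nat pmf"
    and S :: "'n::finite \<Rightarrow> nat pmf"
    and P :: "('n \<Rightarrow> nat) \<Rightarrow> 'n pmf"
    and Qbar :: "real \<Rightarrow> ('n \<Rightarrow> nat) pmf"
    and Amax Smax :: nat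
    and sigma2 :: real
  defines "mu \<equiv> \<lambda>n. measure_pmf.expectation (S n) real"
  defines "muS \<equiv> (\<Sum>n\<in>UNIV. mu n)"
  defines "zeta \<equiv> sigma2 + (\<Sum>n\<in>UNIV. measure_pmf.variance (S n) real)"
  assumes serv_bdd: "\<And>n. set_pmf (S n) \<subseteq> {..Smax}"
    and serv_pos: "\<And>n. mu n > 0"
    and arr_bdd: "\<And>\<epsilon>. 0 < \<epsilon> \<Longrightarrow> \<epsilon> < muS \<Longrightarrow> set_pmf (Arr \<epsilon>) \<subseteq> {..Amax}"
    and arr_zero: "\<And>\<epsilon>. 0 < \<epsilon> \<Longrightarrow> \<epsilon> < muS \<Longrightarrow> pmf (Arr \<epsilon>) 0 > 0"
    and arr_mean: "\<And>\<epsilon>. 0 < \<epsilon> \<Longrightarrow> \<epsilon> < muS \<Longrightarrow>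
                     measure_pmf.expectation (Arr \<epsilon>) real = muS - \<epsilon>"
    and arr_var: "((\<lambda>\<epsilon>. measure_pmf.variance (Arr \<epsilon>) real) \<longlongrightarrow> sigma2) (at_right 0)"
    and stat: "\<And>\<epsilon>. 0 < \<epsilon> \<Longrightarrow> \<epsilon> < muS \<Longrightarrow> stationary (lb_step (Arr \<epsilon>) S P) (Qbar \<epsilon>)"
    and thr_opt: "\<And>\<epsilon> r. 0 < \<epsilon> \<Longrightarrow> \<epsilon> < muS \<Longrightarrow>
                     integrable (measure_pmf (Qbar \<epsilon>)) (\<lambda>q. norm (qvec q) ^ r)"
    and collapse: "\<exists>\<alpha> \<epsilon>0 M. 0 < \<alpha> \<and> \<alpha> \<le> 1 \<and> 0 < \<epsilon>0 \<and>
                     (\<forall>\<epsilon> r. 0 < \<epsilon> \<and> \<epsilon> < \<epsilon>0 \<and> \<epsilon> < muS \<and> r \<ge> 1 \<longrightarrow>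
                        measure_pmf.expectation (Qbar \<epsilon>) (\<lambda>q. norm (perp_comp \<alpha> (qvec q)) ^ r)
                          \<le> M r)"
  shows "Limsup (at_right 0)
           (\<lambda>\<epsilon>. ereal (\<epsilon> * measure_pmf.expectation (Qbar \<epsilon>) (\<lambda>q. real (\<Sum>n\<in>UNIV. q n))))
         \<le> ereal (zeta / 2)"
proof -
  obtain \<alpha> \<epsilon>0 M where \<alpha>: "0 < \<alpha>" "\<alpha> \<le> 1" and "0 < \<epsilon>0"
    and M: "\<forall>\<epsilon> r. 0 < \<epsilon> \<and> \<epsilon> < \<epsilon>0 \<and> \<epsilon> < muS \<and> r \<ge> 1 \<longrightarrow>
              measure_pmf.expectation (Qbar \<epsilon>) (\<lambda>q. norm (perp_comp \<alpha> (qvec q)) ^ r) \<le> M r"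
    using collapse by blast
  have "0 < muS"
    using serv_pos by (simp add: muS_def sum_pos)
  define C where "C = real CARD('n) * (1 + 1 / \<alpha>)"
  define B where "B \<epsilon> = (measure_pmf.variance (Arr \<epsilon>) real + (\<Sum>n\<in>UNIV. measure_pmf.variance (S n) real)
      + \<epsilon>\<^sup>2 + C * sqrt \<epsilon> * M 2 + C * real CARD('n) * real Smax * sqrt \<epsilon>) / 2" for \<epsilon>
  have bound: "\<epsilon> * measure_pmf.expectation (Qbar \<epsilon>) sum_entries \<le> B \<epsilon>"
    if "0 < \<epsilon>" "\<epsilon> < \<epsilon>0" "\<epsilon> < muS" for \<epsilon>
    unfolding B_def C_def
  proof (rule stationary_sum_entries_bound_sqrt[OF stat[OF that(1,3)] _ serv_bdd \<alpha>])
    show "finite (set_pmf (Arr \<epsilon>))"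
      using arr_bdd[OF that(1,3)] finite_subset by blast
    show "measure_pmf.expectation (Arr \<epsilon>) real = (\<Sum>n\<in>UNIV. measure_pmf.expectation (S n) real) - \<epsilon>"
      using arr_mean[OF that(1,3)] by (simp add: muS_def mu_def)
  qed (use that thr_opt[OF that(1,3), of 1] thr_opt[OF that(1,3), of 2] M in auto)
  have "\<forall>\<^sub>F \<epsilon> in at_right 0. ereal (\<epsilon> * measure_pmf.expectation (Qbar \<epsilon>) sum_entries) \<le> ereal (B \<epsilon>)"
    using \<open>0 < \<epsilon>0\<close> \<open>0 < muS\<close> bound
    by (auto simp: eventually_at_right_field intro!: exI[of _ "min \<epsilon>0 muS"])
  then have "Limsup (at_right 0) (\<lambda>\<epsilon>. ereal (\<epsilon> * measure_pmf.expectation (Qbar \<epsilon>) sum_entries))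
      \<le> Limsup (at_right 0) (\<lambda>\<epsilon>. ereal (B \<epsilon>))"
    by (rule Limsup_mono)
  also have "\<dots> = ereal (zeta / 2)"
    unfolding B_def zeta_def
    by (intro lim_imp_Limsup tendsto_ereal) (auto intro!: tendsto_eq_intros arr_var)
  finally show ?thesis
    unfolding sum_entries_def[abs_def] .
qed

end
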